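(* Consider the setting and algorithm described in the context. Let $\gamma>0$ and $K_0\ge0$ be such that for all $k\ge K_0$: $\gamma_k=\gamma$, $\delta_k=\delta:=2\nu+L_{\nabla h}+\frac{2\|A\|^2}{\gamma}$ and $\|z^{k+1}\|\le\min\left(\frac{\varepsilon}{\gamma},\sqrt{\frac{2\varepsilon}{\gamma}}\right)$. Let $0<m\le M$ be constants with $m<f(Kx^k)\le M$ for all $k\ge1$, and let $K_1\ge K_0+1$ be such that $m\le\langle Kx^k,y^k\rangle-f^*(y^k)\le f(Kx^k)\le M$ for all $k\ge K_1$. Define $\Gamma(x,y,z,u):=\frac{\Psi(x,z,u,\delta,\gamma)}{\langle Kx,y\rangle-f^*(y)}$ on $\{(x,y)\in\mathbb{R}^n\times\operatorname{dom}f^*:\langle Kx,y\rangle-f^*(y)>m/2\}\times\operatorname{dom}g^*\times\mathbb{R}^n$. Let $\theta_k$ be the scalars produced by the algorithm, $\bar\theta:=\lim_{k\to\infty}\theta_k$ (which exists), and $\Omega$ the set of accumulation points of $\{(x^k,y^k,z^k,u^k)\}$. Then: (i) there exists $c>0$ such that for all $k\ge K_1$, $\Gamma(x^{k+1},y^{k+1},z^{k+1},u^{k+1})\le\Gamma(x^k,y^k,z^k,u^k)-c\|x^k-x^{k+1}\|^2-c\|u^k-u^{k+1}\|^2-c\|z^k-z^{k+1}\|^2$; (ii) $\lim_{k\to\infty}\Gamma(x^k,y^k,z^k,u^k)$ exists and equals $\bar\theta$; (iii) $\Gamma(\bar x,\bar y,\bar z,\bar u)=\bar\theta$ for every $(\bar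 x,\bar y,\bar z,\bar u)\in\Omega$.
   Context: Setting: $\mathcal{S}\subseteq\mathbb{R}^n$ nonempty, convex, compact; $A:\mathbb{R}^n\to\mathbb{R}^s$, $K:\mathbb{R}^n\to\mathbb{R}^p$ linear with adjoints $A^*,K^*$ and operator norm $\|A\|$; $g:\mathbb{R}^s\to\mathbb{R}\cup\{+\infty\}$ proper, convex, lsc; $h:\mathbb{R}^n\to\mathbb{R}$ differentiable on an open set containing $\mathcal{S}$ with $L_{\nabla h}$-Lipschitz gradient there; $f:\mathbb{R}^p\to\mathbb{R}\cup\{+\infty\}$ proper, convex, lsc with $K(\mathcal{S})\subseteq\operatorname{int}(\operatorname{dom}f)$ and $f(Kx)>0$ on $\mathcal{S}$; $\mathcal{S}\cap A^{-1}(\operatorname{dom}g)\ne\emptyset$, $\inf_{x\in\mathcal{S}}\{g(Ax)+h(x)\}>0$; $A(\mathcal{S})\subseteq\operatorname{dom}(\partial g)$ and there is $\ell>0$ with $\operatorname{dist}(0,\partial g(Ax))\le\ell$ for all $x\in\mathcal{S}$. Notation: $f^*,g^*$ Fenchel conjugates; $\iota_{\mathcal{S}}$ indicator; $\operatorname{Proj}_{\mathcal{S}}$ projection; $\operatorname{prox}_{\varphi,\kappa}(x)=\arg\min_y\{\varphi(y)+\frac1{2\kappa}\|y-x\|^2\}$; $\Psi(x,z,u,\delta,\gamma):=\langle z,Ax\rangle-g^*(z)+h(x)+\iota_{\mathcal{S}}(x)+\frac{\delta}{2}\|x-u\|^2-\frac{\gamma}{2}\|z\|^2$. Algorithm: given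 $0<\beta<2$, $\nu>0$, $0<q<1$, $\delta_0,\theta_0>0$, $\gamma_0=1$, $\varepsilon>0$ and $(x^0,z^0,u^0)$, for $k\ge0$: choose $y^{k+1}\in\partial f(Kx^k)$; $x^{k+1}:=\operatorname{Proj}_{\mathcal{S}}(u^k+\frac{\theta_k}{\delta_k}K^*y^{k+1}-\frac1{\delta_k}\nabla h(x^k)-\frac1{\delta_k}A^*z^k)$; $u^{k+1}:=(1-\beta)u^k+\beta x^{k+1}$; take the smallest $j_k\ge0$ such that with $\gamma_{k,j_k}:=\gamma_kq^{j_k}$, $z^{k+1,j_k}:=\operatorname{prox}_{g^*,1/\gamma_{k,j_k}}(Ax^{k+1}/\gamma_{k,j_k})$ one has $\theta_{k+1}:=\Psi(x^{k+1},z^{k+1,j_k},u^{k+1},\delta_k,\gamma_{k,j_k})/f(Kx^{k+1})>0$; set $\gamma_{k+1}:=\gamma_{k,j_k}$, $\delta_{k+1}:=2\nu+L_{\nabla h}+2\|A\|^2/\gamma_{k+1}$, $z^{k+1}:=z^{k+1,j_k}$; if $\|z^{k+1}\|>\min(\varepsilon/\gamma_{k+1},\sqrt{2\varepsilon/\gamma_{k+1}})$, replace $\gamma_{k+1}$ by $\gamma_{k+1}q$ and recompute $\delta_{k+1}$ by the same formula. *)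

theory Defs
  imports "HOL-Analysis.Analysis"
begin

text \<open>Extended-real-valued functions \<open>\<real>\<^sup>d \<rightarrow> \<real> \<union> {+\<infinity>}\<close> are modelled as \<open>'a \<Rightarrow> ereal\<close>.\<close>

definition edom :: "('a \<Rightarrow> ereal) \<Rightarrow> 'a set" where
  "edom f = {x. f x < \<infinity>}"

definition eproper :: "('a \<Rightarrow> ereal) \<Rightarrow> bool" where
  "eproper f \<longleftrightarrow> (\<forall>x. f x \<noteq> -\<infinity>) \<and> edom f \<noteq> {}"

definition econvex :: "('a::real_vector \<Rightarrow> ereal) \<Rightarrow> bool" where
  "econvex f \<longleftrightarrow> (\<forall>x y t. 0 < t \<and> t < 1 \<longrightarrow>
      f ((1 - t) *\<^sub>R x + t *\<^sub>R y) \<le> ereal (1 - t) * f x + ereal t * f y)"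

definition elsc :: "('a::metric_space \<Rightarrow> ereal) \<Rightarrow> bool" where
  "elsc f \<longleftrightarrow> (\<forall>x X. X \<longlonglongrightarrow> x \<longrightarrow> f x \<le> liminf (\<lambda>n. f (X n)))"

definition fconj :: "('a::real_inner \<Rightarrow> ereal) \<Rightarrow> 'a \<Rightarrow> ereal" where
  "fconj f v = (SUP x. ereal (x \<bullet> v) - f x)"

text \<open>convex subdifferential (empty outside the domain)\<close>
definition esubdiff :: "('a::real_inner \<Rightarrow> ereal) \<Rightarrow> 'a \<Rightarrow> 'a set" where
  "esubdiff f x = {v. f x \<noteq> \<infinity> \<and> (\<forall>w. f x + ereal (v \<bullet> (w - x)) \<le> f w)}"

definition eprox :: "('a::real_normed_vector \<Rightarrow> ereal) \<Rightarrow> real \<Rightarrow> 'a \<Rightarrow> 'a" where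
  "eprox \<phi> \<kappa> x = (SOME y. \<forall>w. \<phi> y + ereal (norm (y - x)^2 / (2 * \<kappa>))
                                \<le> \<phi> w + ereal (norm (w - x)^2 / (2 * \<kappa>)))"

definition eindicator :: "'a set \<Rightarrow> 'a \<Rightarrow> ereal" where
  "eindicator S x = (if x \<in> S then 0 else \<infinity>)"

definition Psi :: "('a::real_normed_vector \<Rightarrow> 'b::real_inner) \<Rightarrow> ('b \<Rightarrow> ereal) \<Rightarrow> ('a \<Rightarrow> real)
    \<Rightarrow> 'a set \<Rightarrow> 'a \<Rightarrow> 'b \<Rightarrow> 'a \<Rightarrow> real \<Rightarrow> real \<Rightarrow> ereal" where
  "Psi A g h S x z u \<delta> \<gamma> = ereal (z \<bullet> A x) - fconj g z + ereal (h x) + eindicator S x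
      + ereal (\<delta> / 2 * norm (x - u)^2) - ereal (\<gamma> / 2 * norm z ^ 2)"

definition zstep :: "('b::real_inner \<Rightarrow> ereal) \<Rightarrow> ('a \<Rightarrow> 'b) \<Rightarrow> real \<Rightarrow> 'a \<Rightarrow> 'b" where
  "zstep g A \<gamma> x = eprox (fconj g) (1 / \<gamma>) ((1 / \<gamma>) *\<^sub>R A x)"

definition Gamma :: "('a::real_normed_vector \<Rightarrow> 'b::real_inner) \<Rightarrow> ('a \<Rightarrow> 'c::real_inner)
    \<Rightarrow> ('c \<Rightarrow> ereal) \<Rightarrow> ('b \<Rightarrow> ereal) \<Rightarrow> ('a \<Rightarrow> real) \<Rightarrow> 'a set \<Rightarrow> real \<Rightarrow> real
    \<Rightarrow> 'a \<Rightarrow> 'c \<Rightarrow> 'b \<Rightarrow> 'a \<Rightarrow> ereal" where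
  "Gamma A K f g h S \<delta> \<gamma> x y z u = Psi A g h S x z u \<delta> \<gamma> / (ereal (K x \<bullet> y) - fconj f y)"

end

theory Submission
  imports Defs
begin

(* From step K1 on the step sizes are frozen, and Gamma at the iterates is the real quotient
   num k / den k, where den k = <K x_k, y_k> - f*(y_k) lies in [m, M] and below f (K x_k);
   hence theta_k = num k / f (K x_k) <= num k / den k.  The projection inequality of the
   x-step, the descent lemma for h, the three-point inequality of the proximal z-step and the
   Fenchel-Young equality f*(y_(k+1)) = <K x_k, y_(k+1)> - f (K x_k) add up to
     num (k+1) <= theta_k den (k+1) - (nu |dx|^2 + gamma/4 |dz|^2 + delta (2-beta)/(2 beta) |du|^2),
   so theta_(k+1) <= Gamma_(k+1) <= theta_k - c (...) <= Gamma_k - c (...).  Thus theta_k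
   decreases to a limit that squeezes Gamma_k.  Along a convergent subsequence the conjugate
   values converge: they are bounded below by lower semicontinuity of f* and g*, and above
   via the subgradient relation for y and the prox optimality for z; so Gamma passes to the
   limit. *)

section \<open>Fenchel conjugates\<close>

lemma fenchel_young: "ereal (x \<bullet> v) - f x \<le> fconj f v"
  unfolding fconj_def by (rule SUP_upper) auto

lemma fenchel_young_eq:
  assumes "v \<in> esubdiff f p"
  shows "fconj f v = ereal (p \<bullet> v) - f p"
proof (rule antisym)
  have fp: "f p \<noteq> \<infinity>" and sub: "\<And>w. f p + ereal (v \<bullet> (w - p)) \<le> f w"
    using assms unfolding esubdiff_def by auto
  show "fconj f v \<le> ereal (p \<bullet> v) - f p"
    unfolding fconj_def
  proof (rule SUP_least)
    fix w
    show "ereal (w \<bullet> v) - f w \<le> ereal (p \<bullet> v) - f p"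
    proof (cases "f p")
      case (real c)
      then have "ereal (c + v \<bullet> (w - p)) \<le> f w" using sub[of w] by simp
      then show ?thesis using real by (cases "f w") (auto simp: inner_simps inner_commute)
    qed (use fp in auto)
  qed
qed (rule fenchel_young)

lemma fconj_affine_minorant:
  assumes "eproper g"
  obtains x0 c0 where "\<And>w. ereal (x0 \<bullet> w - c0) \<le> fconj g w"
proof -
  obtain x0 where "g x0 < \<infinity>" "g x0 \<noteq> -\<infinity>"
    using assms unfolding eproper_def edom_def by auto
  then obtain c0 where "g x0 = ereal c0" by (cases "g x0") auto
  then show ?thesis using that fenchel_young[of x0 _ g] by (metis ereal_minus(1))
qed

lemma fconj_not_MInfty:
  assumes "eproper g" shows "fconj g w \<noteq> -\<infinity>"
  using fconj_affine_minorant[OF assms] by (metis MInfty_neq_ereal(1) ereal_infty_less_eq(2))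

lemma fconj_lsc:
  assumes "w \<longlonglongrightarrow> wb"
  shows "fconj g wb \<le> liminf (\<lambda>n. fconj g (w n))"
  unfolding fconj_def[of g wb]
proof (rule SUP_least)
  fix x
  have "(\<lambda>n. ereal (x \<bullet> w n) - g x) \<longlonglongrightarrow> ereal (x \<bullet> wb) - g x"
    by (cases "g x") (auto intro!: tendsto_diff tendsto_inner assms)
  then have "ereal (x \<bullet> wb) - g x = liminf (\<lambda>n. ereal (x \<bullet> w n) - g x)"
    by (simp add: lim_imp_Liminf)
  also have "\<dots> \<le> liminf (\<lambda>n. fconj g (w n))"
    by (intro Liminf_mono always_eventually allI fenchel_young)
  finally show "ereal (x \<bullet> wb) - g x \<le> liminf (\<lambda>n. fconj g (w n))" .
qed

lemma fconj_le_lim: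
  assumes "w \<longlonglongrightarrow> wb" "\<forall>\<^sub>F n in sequentially. fconj g (w n) \<le> ereal (b n)" "b \<longlonglongrightarrow> \<beta>"
  shows "fconj g wb \<le> ereal \<beta>"
proof -
  have "fconj g wb \<le> liminf (\<lambda>n. fconj g (w n))" by (rule fconj_lsc[OF assms(1)])
  also have "\<dots> \<le> liminf (\<lambda>n. ereal (b n))" by (rule Liminf_mono[OF assms(2)])
  also have "\<dots> = ereal \<beta>" using assms(3) by (simp add: lim_imp_Liminf)
  finally show ?thesis .
qed

lemma fconj_tendsto_from_above:
  assumes "w \<longlonglongrightarrow> wb" "fconj g wb = ereal G"
    and "\<forall>\<^sub>F n in sequentially. fconj g (w n) \<le> ereal (b n)" "b \<longlonglongrightarrow> G"
  shows "(\<lambda>n. fconj g (w n)) \<longlonglongrightarrow> fconj g wb"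
proof (rule Liminf_eq_Limsup)
  have "limsup (\<lambda>n. fconj g (w n)) \<le> limsup (\<lambda>n. ereal (b n))" by (rule Limsup_mono[OF assms(3)])
  also have "\<dots> = fconj g wb" using assms(2,4) by (simp add: lim_imp_Limsup)
  finally have "limsup (\<lambda>n. fconj g (w n)) \<le> fconj g wb" .
  moreover have "fconj g wb \<le> liminf (\<lambda>n. fconj g (w n))" by (rule fconj_lsc[OF assms(1)])
  ultimately show "liminf (\<lambda>n. fconj g (w n)) = fconj g wb" "limsup (\<lambda>n. fconj g (w n)) = fconj g wb"
    using Liminf_le_Limsup[of sequentially "\<lambda>n. fconj g (w n)"] by auto
qed simp

section \<open>The proximal step on the conjugate\<close>

lemma fconj_convex:
  assumes "fconj g a = ereal Fa" "fconj g b = ereal Fb" "0 \<le> t" "t \<le> 1"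
  shows "fconj g ((1 - t) *\<^sub>R a + t *\<^sub>R b) \<le> ereal ((1 - t) * Fa + t * Fb)"
  unfolding fconj_def
proof (rule SUP_least)
  fix x
  show "ereal (x \<bullet> ((1 - t) *\<^sub>R a + t *\<^sub>R b)) - g x \<le> ereal ((1 - t) * Fa + t * Fb)"
  proof (cases "g x")
    case (real c)
    have "x \<bullet> a - c \<le> Fa" "x \<bullet> b - c \<le> Fb"
      using fenchel_young[of x _ g] assms(1,2) real by (metis ereal_less_eq(3) ereal_minus(1))+
    then have "(1 - t) * (x \<bullet> a - c) + t * (x \<bullet> b - c) \<le> (1 - t) * Fa + t * Fb"
      using assms(3,4) by (intro add_mono mult_left_mono) auto
    then show ?thesis using real by (simp add: inner_add_right algebra_simps)
  next
    case MInf
    then show ?thesis using fenchel_young[of x a g] assms(1) by simp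
  qed simp
qed

lemma fconj_prox_objective_coercive:
  fixes v :: "'a::real_inner"
  assumes g: "eproper g" and \<kappa>: "\<kappa> > 0"
  obtains v' c where
    "\<And>w. ereal (norm (w - v')^2 / (2*\<kappa>) + c) \<le> fconj g w + ereal (norm (w - v)^2 / (2*\<kappa>))"
proof -
  obtain x0 c0 where minorant: "\<And>w. ereal (x0 \<bullet> w - c0) \<le> fconj g w"
    using fconj_affine_minorant[OF g] by blast
  have "norm (w - (v - \<kappa> *\<^sub>R x0))^2 = norm (w - v)^2 + 2*\<kappa>*(x0 \<bullet> (w - v)) + \<kappa>^2 * norm x0 ^2" for w
    unfolding power2_norm_eq_inner by (simp add: inner_simps algebra_simps power2_eq_square inner_commute)
  then have "norm (w - (v - \<kappa> *\<^sub>R x0))^2 / (2*\<kappa>) + (x0 \<bullet> v - \<kappa> * norm x0 ^2 / 2 - c0)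
      = (x0 \<bullet> w - c0) + norm (w - v)^2 / (2*\<kappa>)" for w
    using \<kappa> by (simp add: field_simps inner_simps power2_eq_square)
  then show ?thesis
    using that[of "v - \<kappa> *\<^sub>R x0" "x0 \<bullet> v - \<kappa> * norm x0 ^2 / 2 - c0"] minorant
    by (metis add_right_mono plus_ereal.simps(1))
qed

lemma fconj_prox_objective_has_min:
  fixes v :: "'a::euclidean_space"
  assumes g: "eproper g" and \<kappa>: "\<kappa> > 0" and w0: "fconj g w0 \<noteq> \<infinity>"
  shows "\<exists>p. \<forall>w. fconj g p + ereal (norm (p - v)^2 / (2*\<kappa>)) \<le> fconj g w + ereal (norm (w - v)^2 / (2*\<kappa>))"
proof -
  define G where "G w = fconj g w + ereal (norm (w - v)^2 / (2*\<kappa>))" for w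
  define I where "I = (INF w. G w)"
  obtain v' k0 where coercive: "\<And>w. ereal (norm (w - v')^2 / (2*\<kappa>) + k0) \<le> G w"
    using fconj_prox_objective_coercive[OF g \<kappa>] unfolding G_def by blast
  have "ereal k0 \<le> I"
    unfolding I_def using \<kappa> by (intro INF_greatest order_trans[OF _ coercive]) simp
  moreover have "I \<le> G w0" unfolding I_def by (rule INF_lower) simp
  moreover have "G w0 < \<infinity>" unfolding G_def using w0 by simp
  ultimately obtain Ir where Ir: "I = ereal Ir" by (cases I) auto
  have "\<exists>w. G w < ereal (Ir + 1 / Suc n)" for n :: nat
  proof -
    have "I < ereal (Ir + 1 / Suc n)" using Ir by simp
    then show ?thesis unfolding I_def by (simp add: INF_less_iff)
  qed
  then obtain w where w: "\<And>n. G (w n) < ereal (Ir + 1 / Suc n)" by metis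
  have w_conj: "fconj g (w n) \<le> ereal (Ir + 1 / Suc n - norm (w n - v)^2 / (2*\<kappa>))" for n
    using w[of n] fconj_not_MInfty[OF g, of "w n"] unfolding G_def by (cases "fconj g (w n)") auto
  have "norm (w n - v')^2 / (2*\<kappa>) \<le> Ir + 1 - k0" for n
  proof -
    have "norm (w n - v')^2 / (2*\<kappa>) + k0 < Ir + 1 / Suc n"
      using order_le_less_trans[OF coercive[of "w n"] w[of n]] by simp
    moreover have "1 / Suc n \<le> (1::real)" by simp
    ultimately show ?thesis by linarith
  qed
  then have "norm (w n - v') \<le> sqrt (2*\<kappa>*(Ir + 1 - k0))" for n
    using \<kappa> by (simp add: real_le_rsqrt field_simps)
  then have "range w \<subseteq> cball v' (sqrt (2*\<kappa>*(Ir + 1 - k0)))"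
    by (auto simp: dist_norm norm_minus_commute)
  then have "bounded (range w)" using bounded_cball bounded_subset by blast
  then obtain l s where s: "strict_mono s" and ls: "(w \<circ> s) \<longlonglongrightarrow> l"
    using bounded_imp_convergent_subsequence by blast
  have "fconj g l \<le> ereal (Ir + 0 - norm (l - v)^2 / (2*\<kappa>))"
  proof (rule fconj_le_lim[OF ls])
    show "\<forall>\<^sub>F n in sequentially. fconj g ((w \<circ> s) n) \<le> ereal (Ir + 1 / Suc (s n) - norm (w (s n) - v)^2 / (2*\<kappa>))"
      using w_conj by simp
    have "(\<lambda>n. 1 / real (Suc (s n))) \<longlonglongrightarrow> 0"
      using LIMSEQ_subseq_LIMSEQ[OF LIMSEQ_inverse_real_of_nat s] by (simp add: o_def divide_inverse)
    then show "(\<lambda>n. Ir + 1 / Suc (s n) - norm (w (s n) - v)^2 / (2*\<kappa>)) \<longlonglongrightarrow> Ir + 0 - norm (l - v)^2 / (2*\<kappa>)"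
      using ls \<kappa> by (intro tendsto_intros) (auto simp: o_def)
  qed
  then have "G l \<le> I"
    unfolding G_def Ir using fconj_not_MInfty[OF g, of l] by (cases "fconj g l") auto
  then show ?thesis unfolding G_def I_def by (meson INF_lower UNIV_I order_trans)
qed

lemma norm_convex_comb_diff_sq:
  fixes p w v :: "'a::real_inner"
  shows "norm ((1 - t) *\<^sub>R p + t *\<^sub>R w - v)^2
      = (1 - t) * norm (p - v)^2 + t * norm (w - v)^2 - t * (1 - t) * norm (w - p)^2"
proof -
  have "(1 - t) *\<^sub>R p + t *\<^sub>R w - v = (1 - t) *\<^sub>R (p - v) + t *\<^sub>R (w - v)"
    by (simp add: algebra_simps)
  moreover have "w - p = (w - v) - (p - v)" by simp
  ultimately show ?thesis unfolding power2_norm_eq_inner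
    by (simp add: inner_simps algebra_simps inner_commute power2_eq_square)
qed

lemma eprox_fconj_three_point:
  fixes v w :: "'a::euclidean_space"
  assumes g: "eproper g" and \<kappa>: "\<kappa> > 0" and Fw: "fconj g w = ereal Fw"
  obtains Fp where "fconj g (eprox (fconj g) \<kappa> v) = ereal Fp"
    and "Fp + norm (eprox (fconj g) \<kappa> v - v)^2 / (2*\<kappa>) + norm (w - eprox (fconj g) \<kappa> v)^2 / (2*\<kappa>)
           \<le> Fw + norm (w - v)^2 / (2*\<kappa>)"
proof -
  define p where "p = eprox (fconj g) \<kappa> v"
  have min: "\<forall>w'. fconj g p + ereal (norm (p - v)^2 / (2*\<kappa>)) \<le> fconj g w' + ereal (norm (w' - v)^2 / (2*\<kappa>))"
    unfolding p_def eprox_def by (rule someI_ex[OF fconj_prox_objective_has_min[OF g \<kappa>, of w]]) (simp add: Fw)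
  obtain Fp where Fp: "fconj g p = ereal Fp"
    using min Fw fconj_not_MInfty[OF g, of p] by (cases "fconj g p") (auto dest: spec[of _ w])
  define a where "a = norm (p - v)^2 / (2*\<kappa>)"
  define b where "b = norm (w - v)^2 / (2*\<kappa>)"
  define d where "d = norm (w - p)^2 / (2*\<kappa>)"
  \<comment> \<open>compare \<open>p\<close> with \<open>(1 - t) p + t w\<close> using convexity of \<open>g\<^sup>*\<close>, then let \<open>t \<rightarrow> 0\<close>\<close>
  have "Fp + a + d - (Fw + b) \<le> t * d" if t: "0 < t" "t < 1" for t
  proof -
    define wt where "wt = (1 - t) *\<^sub>R p + t *\<^sub>R w"
    have "ereal (Fp + a) \<le> fconj g wt + ereal (norm (wt - v)^2 / (2*\<kappa>))"
      using min Fp unfolding a_def by simp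
    also have "\<dots> \<le> ereal ((1 - t) * Fp + t * Fw) + ereal (norm (wt - v)^2 / (2*\<kappa>))"
      using fconj_convex[OF Fp Fw, of t] t unfolding wt_def by (intro add_right_mono) auto
    finally have "Fp + a \<le> (1 - t) * Fp + t * Fw + norm (wt - v)^2 / (2*\<kappa>)" by simp
    also have "norm (wt - v)^2 / (2*\<kappa>) = (1 - t) * a + t * b - t * (1 - t) * d"
      unfolding wt_def norm_convex_comb_diff_sq a_def b_def d_def by (simp add: diff_divide_distrib add_divide_distrib)
    finally have "Fp + a \<le> (1 - t) * Fp + t * Fw + ((1 - t) * a + t * b - t * (1 - t) * d)" .
    then have "t * (Fp + a + d - (Fw + b)) \<le> t * (t * d)" by (simp add: algebra_simps)
    then show ?thesis using t by simp
  qed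
  then have "Fp + a + d - (Fw + b) \<le> 0 * d"
    using eventually_at_right_real[of 0 1]
    by (intro tendsto_lowerbound[OF tendsto_mult_right[OF tendsto_ident_at]]) (auto elim: eventually_mono)
  then show ?thesis using that Fp unfolding p_def a_def b_def d_def by simp
qed

lemma zstep_three_point:
  fixes A :: "'a \<Rightarrow> 'b::euclidean_space"
  assumes g: "eproper g" and \<gamma>: "\<gamma> > 0" and Fw: "fconj g w = ereal Fw"
  obtains Gz where "fconj g (zstep g A \<gamma> x) = ereal Gz"
    and "w \<bullet> A x - Fw - \<gamma>/2 * norm w^2 + \<gamma>/2 * norm (w - zstep g A \<gamma> x)^2
           \<le> zstep g A \<gamma> x \<bullet> A x - Gz - \<gamma>/2 * norm (zstep g A \<gamma> x)^2"
proof -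
  have expand: "norm (q - (1/\<gamma>) *\<^sub>R A x)^2 / (2 * (1/\<gamma>)) = \<gamma>/2 * norm q^2 - q \<bullet> A x + norm (A x)^2 / (2*\<gamma>)" for q
  proof -
    have "norm (q - (1/\<gamma>) *\<^sub>R A x)^2 = norm q^2 - 2/\<gamma> * (q \<bullet> A x) + norm (A x)^2/\<gamma>^2"
      unfolding power2_norm_eq_inner by (simp add: inner_simps inner_commute power2_eq_square)
    then show ?thesis using \<gamma> by (simp add: field_simps power2_eq_square)
  qed
  obtain Gz where "fconj g (zstep g A \<gamma> x) = ereal Gz"
    "Gz + norm (zstep g A \<gamma> x - (1/\<gamma>) *\<^sub>R A x)^2 / (2 * (1/\<gamma>)) + norm (w - zstep g A \<gamma> x)^2 / (2 * (1/\<gamma>))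
       \<le> Fw + norm (w - (1/\<gamma>) *\<^sub>R A x)^2 / (2 * (1/\<gamma>))"
    using eprox_fconj_three_point[OF g _ Fw, of "1/\<gamma>" "(1/\<gamma>) *\<^sub>R A x"] \<gamma> unfolding zstep_def by auto
  then show ?thesis using that unfolding expand by (simp add: algebra_simps)
qed

lemma zstep_fconj_tendsto:
  fixes A :: "'a \<Rightarrow> 'b::euclidean_space"
  assumes g: "eproper g" and \<gamma>: "\<gamma> > 0" and w0: "fconj g w0 \<noteq> \<infinity>"
    and z: "\<forall>\<^sub>F n in sequentially. z n = zstep g A \<gamma> (x n)"
    and Ax: "(\<lambda>n. A (x n)) \<longlonglongrightarrow> a" and zb: "z \<longlonglongrightarrow> zb"
  shows "fconj g zb \<noteq> \<infinity>" and "(\<lambda>n. fconj g (z n)) \<longlonglongrightarrow> fconj g zb"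
proof -
  define bound where "bound w Fw n = Fw - w \<bullet> A (x n) + \<gamma>/2 * norm w^2 + z n \<bullet> A (x n)
    - \<gamma>/2 * norm (z n)^2 - \<gamma>/2 * norm (w - z n)^2" for w Fw n
  have le_bound: "\<forall>\<^sub>F n in sequentially. fconj g (z n) \<le> ereal (bound w Fw n)" if "fconj g w = ereal Fw" for w Fw
    using z
  proof eventually_elim
    case (elim n)
    then show ?case
      using zstep_three_point[OF g \<gamma> that, of A "x n"] unfolding bound_def by (smt (verit) ereal_less_eq(3))
  qed
  have lim_bound: "bound w Fw \<longlonglongrightarrow> Fw - w \<bullet> a + \<gamma>/2 * norm w^2 + zb \<bullet> a - \<gamma>/2 * norm zb^2 - \<gamma>/2 * norm (w - zb)^2"
    for w Fw unfolding bound_def by (intro tendsto_intros Ax zb)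
  obtain F0 where F0: "fconj g w0 = ereal F0"
    using w0 fconj_not_MInfty[OF g, of w0] by (cases "fconj g w0") auto
  obtain Fb where Fb: "fconj g zb = ereal Fb"
    using fconj_le_lim[OF zb le_bound[OF F0] lim_bound] fconj_not_MInfty[OF g, of zb]
    by (cases "fconj g zb") auto
  then show "fconj g zb \<noteq> \<infinity>" by simp
  show "(\<lambda>n. fconj g (z n)) \<longlonglongrightarrow> fconj g zb"
    using fconj_tendsto_from_above[OF zb Fb le_bound[OF Fb]] lim_bound[of zb Fb] by simp
qed

lemma subgradient_fconj_tendsto:
  fixes p y :: "nat \<Rightarrow> 'a::real_inner"
  assumes f: "eproper f" and y: "\<forall>\<^sub>F n in sequentially. y n \<in> esubdiff f (p n)"
    and p: "\<forall>\<^sub>F n in sequentially. norm (p n) \<le> B \<and> ereal c \<le> f (p n)"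
    and yb: "y \<longlonglongrightarrow> yb"
  shows "fconj f yb \<noteq> \<infinity>" and "(\<lambda>n. fconj f (y n)) \<longlonglongrightarrow> fconj f yb"
proof -
  have conj_eq: "\<exists>fp. f (p n) = ereal fp \<and> fconj f (y n) = ereal (p n \<bullet> y n - fp)"
    if "y n \<in> esubdiff f (p n)" for n
  proof -
    have "f (p n) \<noteq> \<infinity>" "f (p n) \<noteq> -\<infinity>"
      using that f by (auto simp: esubdiff_def eproper_def)
    then obtain fp where "f (p n) = ereal fp" by (cases "f (p n)") auto
    then show ?thesis using fenchel_young_eq[OF that] by (auto simp: inner_commute)
  qed
  have cs: "p n \<bullet> v \<le> B * norm v" if "norm (p n) \<le> B" for n v
    using norm_cauchy_schwarz[of "p n" v] mult_right_mono[OF that norm_ge_zero[of v]] by linarith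
  have "\<forall>\<^sub>F n in sequentially. fconj f (y n) \<le> ereal (B * norm (y n) - c)"
    using y p
  proof eventually_elim
    case (elim n)
    then show ?case using conj_eq[OF elim(1)] cs[of n "y n"] by force
  qed
  moreover have "(\<lambda>n. B * norm (y n) - c) \<longlonglongrightarrow> B * norm yb - c"
    by (intro tendsto_intros yb)
  ultimately obtain Fb where Fb: "fconj f yb = ereal Fb"
    using fconj_le_lim[OF yb] fconj_not_MInfty[OF f, of yb] by (cases "fconj f yb") force+
  then show "fconj f yb \<noteq> \<infinity>" by simp
  have "\<forall>\<^sub>F n in sequentially. fconj f (y n) \<le> ereal (Fb + B * norm (y n - yb))"
    using y p
  proof eventually_elim
    case (elim n)
    obtain fp where fp: "f (p n) = ereal fp" "fconj f (y n) = ereal (p n \<bullet> y n - fp)"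
      using conj_eq[OF elim(1)] by blast
    have "p n \<bullet> yb - fp \<le> Fb" using fenchel_young[of "p n" yb f] fp(1) Fb by simp
    moreover have "p n \<bullet> (y n - yb) \<le> B * norm (y n - yb)" using cs elim(2) by blast
    ultimately show ?case using fp(2) by (simp add: inner_diff_right)
  qed
  moreover have "(\<lambda>n. Fb + B * norm (y n - yb)) \<longlonglongrightarrow> Fb"
  proof -
    have "(\<lambda>n. Fb + B * norm (y n - yb)) \<longlonglongrightarrow> Fb + B * norm (yb - yb)"
      by (intro tendsto_intros yb)
    then show ?thesis by simp
  qed
  ultimately show "(\<lambda>n. fconj f (y n)) \<longlonglongrightarrow> fconj f yb"
    by (rule fconj_tendsto_from_above[OF yb Fb])
qed

section \<open>Gradient and projection steps\<close>

lemma lipschitz_constant_nonneg: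
  fixes G :: "'a::{real_normed_vector,perfect_space} \<Rightarrow> 'b::real_normed_vector"
  assumes "open U" "w \<in> U" "\<forall>w\<in>U. \<forall>w'\<in>U. norm (G w - G w') \<le> L * norm (w - w')"
  shows "0 \<le> L"
proof -
  obtain w' where w': "w' \<in> U" "w' \<noteq> w"
    using assms(1,2) not_open_singleton[of w] by (metis insert_absorb singletonI subsetI subset_singletonD)
  then have "0 \<le> L * norm (w' - w)" using assms(2,3) by (meson norm_ge_zero order_trans)
  then show ?thesis using w'(2) by (simp add: zero_le_mult_iff)
qed

lemma descent_lemma:
  fixes h :: "'a::real_inner \<Rightarrow> real"
  assumes "open U" "convex S" "S \<subseteq> U"
    and der: "\<forall>w\<in>U. (h has_derivative (\<lambda>v. gradh w \<bullet> v)) (at w)"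
    and lip: "\<forall>w\<in>U. \<forall>w'\<in>U. norm (gradh w - gradh w') \<le> L * norm (w - w')"
    and xy: "x \<in> S" "y \<in> S"
  shows "h y \<le> h x + gradh x \<bullet> (y - x) + L / 2 * norm (y - x)^2"
proof -
  define d where "d = y - x"
  define \<phi> where "\<phi> t = h (x + t *\<^sub>R d) - t * (gradh x \<bullet> d) - L / 2 * t^2 * norm d ^2" for t
  have "\<phi> 1 \<le> \<phi> 0"
  proof (rule DERIV_nonpos_imp_nonincreasing[of 0 1])
    fix t :: real assume t: "0 \<le> t" "t \<le> 1"
    have "x + t *\<^sub>R d = (1 - t) *\<^sub>R x + t *\<^sub>R y" unfolding d_def by (simp add: algebra_simps)
    then have "x + t *\<^sub>R d \<in> U" using convexD_alt[OF assms(2) xy, of t] t assms(3) by auto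
    then have "(h has_derivative (\<lambda>v. gradh (x + t *\<^sub>R d) \<bullet> v)) (at (x + t *\<^sub>R d))"
      using der by blast
    moreover have "((\<lambda>s. x + s *\<^sub>R d) has_derivative (\<lambda>s. s *\<^sub>R d)) (at t)"
      by (auto intro!: derivative_eq_intros)
    ultimately have "((\<lambda>s. h (x + s *\<^sub>R d)) has_derivative (\<lambda>s. gradh (x + t *\<^sub>R d) \<bullet> (s *\<^sub>R d))) (at t)"
      using has_derivative_compose by blast
    then have "DERIV (\<lambda>s. h (x + s *\<^sub>R d)) t :> gradh (x + t *\<^sub>R d) \<bullet> d"
      unfolding has_field_derivative_def by (rule has_derivative_eq_rhs) (auto simp: fun_eq_iff)
    then have "DERIV \<phi> t :> (gradh (x + t *\<^sub>R d) - gradh x) \<bullet> d - L * t * norm d ^2"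
      unfolding \<phi>_def by (auto intro!: derivative_eq_intros simp: algebra_simps inner_diff_left power2_eq_square)
    moreover have "(gradh (x + t *\<^sub>R d) - gradh x) \<bullet> d \<le> L * t * norm d ^2"
    proof -
      have "(gradh (x + t *\<^sub>R d) - gradh x) \<bullet> d \<le> norm (gradh (x + t *\<^sub>R d) - gradh x) * norm d"
        by (rule norm_cauchy_schwarz)
      also have "\<dots> \<le> (L * norm (t *\<^sub>R d)) * norm d"
        using lip \<open>x + t *\<^sub>R d \<in> U\<close> assms(3) xy(1) by (intro mult_right_mono) force+
      finally show ?thesis using t by (simp add: power2_eq_square mult.assoc)
    qed
    ultimately show "\<exists>D. DERIV \<phi> t :> D \<and> D \<le> 0" by force
  qed simp
  then show ?thesis unfolding \<phi>_def d_def by simp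
qed

lemma closest_point_step_inequality:
  fixes u d x :: "'a::euclidean_space"
  assumes "convex S" "closed S" "x \<in> S" "\<delta> > 0"
  defines "p \<equiv> closest_point S (u + (1/\<delta>) *\<^sub>R d)"
  shows "\<delta>/2 * (norm (p - x)^2 + norm (p - u)^2 - norm (x - u)^2) \<le> d \<bullet> (p - x)"
proof -
  have "(u + (1/\<delta>) *\<^sub>R d - p) \<bullet> (x - p) \<le> 0"
    unfolding p_def by (rule closest_point_dot[OF assms(1-3)])
  then have "(u - p) \<bullet> (x - p) + (1/\<delta>) * (d \<bullet> (x - p)) \<le> 0"
    by (simp add: inner_diff_left inner_add_left)
  then have "\<delta> * ((u - p) \<bullet> (x - p) + (1/\<delta>) * (d \<bullet> (x - p))) \<le> 0"
    using assms(4) by (simp add: mult_nonneg_nonpos)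
  then have "\<delta> * ((u - p) \<bullet> (x - p)) \<le> d \<bullet> (p - x)"
    using assms(4) by (simp add: distrib_left inner_diff_right)
  moreover have "norm (x - u)^2 = norm (p - x)^2 + norm (p - u)^2 - 2 * ((u - p) \<bullet> (x - p))"
  proof -
    have "x - u = (x - p) - (u - p)" by simp
    then show ?thesis unfolding power2_norm_eq_inner by (simp add: inner_simps inner_commute)
  qed
  then have "\<delta>/2 * (norm (p - x)^2 + norm (p - u)^2 - norm (x - u)^2) = \<delta> * ((u - p) \<bullet> (x - p))"
    by simp
  ultimately show ?thesis by linarith
qed

lemma mult_le_weighted_squares:
  fixes a b \<gamma> :: real
  assumes "\<gamma> > 0"
  shows "a * b \<le> \<gamma>/4 * a^2 + b^2/\<gamma>"
proof -
  have "0 \<le> (\<gamma> * a - 2 * b)^2 / (4*\<gamma>)" using assms by simp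
  also have "\<dots> = \<gamma>/4 * a^2 + b^2/\<gamma> - a * b" using assms by (simp add: field_simps power2_eq_square)
  finally show ?thesis by simp
qed

lemma backtracking_exponent_eq_0:
  fixes q \<gamma> :: real
  assumes "0 < q" "q < 1" "\<gamma> \<noteq> 0" "\<gamma> = (if c then \<gamma> * q ^ j * q else \<gamma> * q ^ j)"
  shows "j = 0"
proof -
  have "q ^ Suc i < 1" for i by (rule power_Suc_less_one[OF assms(1,2)])
  then have "q ^ j * q \<noteq> 1" "j \<noteq> 0 \<Longrightarrow> q ^ j \<noteq> 1"
    by (metis power_Suc2 less_irrefl, metis not0_implies_Suc less_irrefl)
  then show ?thesis using assms(3,4) by (auto simp: mult.assoc split: if_splits)
qed

section \<open>The iteration with frozen step sizes\<close>

lemma Psi_eq_ereal: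
  assumes "x \<in> S" "fconj g z = ereal G"
  shows "Psi A g h S x z u \<delta> \<gamma> = ereal (z \<bullet> A x - G + h x + \<delta>/2 * norm (x - u)^2 - \<gamma>/2 * norm z^2)"
  using assms unfolding Psi_def eindicator_def by simp

lemma Psi_eq_MInfty:
  assumes "x \<in> S" "fconj g z = \<infinity>"
  shows "Psi A g h S x z u \<delta> \<gamma> = -\<infinity>"
  using assms unfolding Psi_def eindicator_def by simp

lemma Gamma_eq_ereal:
  assumes "x \<in> S" "fconj g z = ereal G" "fconj f y = ereal F" "K x \<bullet> y - F \<noteq> 0"
  shows "Gamma A K f g h S \<delta> \<gamma> x y z u
    = ereal ((z \<bullet> A x - G + h x + \<delta>/2 * norm (x - u)^2 - \<gamma>/2 * norm z^2) / (K x \<bullet> y - F))"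
  using assms unfolding Gamma_def by (simp add: Psi_eq_ereal)

text \<open>The iteration from step \<open>N\<close> on, when \<open>\<gamma>\<^sub>k = \<gamma>\<close> and \<open>\<delta>\<^sub>k = \<delta>\<close> no longer change and no
  backtracking occurs; \<open>N\<close> plays the role of the paper's \<open>K\<^sub>1\<close>.\<close>

locale steady_iteration =
  fixes S :: "'a::euclidean_space set"
    and A :: "'a \<Rightarrow> 'b::euclidean_space" and K :: "'a \<Rightarrow> 'c::euclidean_space"
    and f :: "'c \<Rightarrow> ereal" and g :: "'b \<Rightarrow> ereal"
    and h :: "'a \<Rightarrow> real" and gradh :: "'a \<Rightarrow> 'a" and U :: "'a set" and L :: real
    and \<beta> \<nu> \<gamma> \<delta> m M :: real
    and x u :: "nat \<Rightarrow> 'a" and y :: "nat \<Rightarrow> 'c" and z :: "nat \<Rightarrow> 'b" and \<theta> :: "nat \<Rightarrow> real"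
    and N :: nat
  assumes S: "convex S" "compact S"
    and lin: "linear A" "linear K"
    and h: "open U" "S \<subseteq> U" "\<forall>w\<in>U. (h has_derivative (\<lambda>v. gradh w \<bullet> v)) (at w)"
           "\<forall>w\<in>U. \<forall>w'\<in>U. norm (gradh w - gradh w') \<le> L * norm (w - w')"
    and proper: "eproper f" "eproper g"
    and params: "0 < \<beta>" "\<beta> < 2" "0 < \<nu>" "0 < \<gamma>" "2 * \<nu> + L + 2 * (onorm A)^2 / \<gamma> \<le> \<delta>" "0 < m"
    and x_mem: "\<And>k. N \<le> k \<Longrightarrow> x k \<in> S"
    and x_step: "\<And>k. N \<le> k \<Longrightarrow> x (Suc k) = closest_point S (u k + (\<theta> k / \<delta>) *\<^sub>R adjoint K (y (Suc k))
                    - (1 / \<delta>) *\<^sub>R gradh (x k) - (1 / \<delta>) *\<^sub>R adjoint A (z k))"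
    and u_step: "\<And>k. N \<le> k \<Longrightarrow> u (Suc k) = (1 - \<beta>) *\<^sub>R u k + \<beta> *\<^sub>R x (Suc k)"
    and y_step: "\<And>k. N \<le> k \<Longrightarrow> y (Suc k) \<in> esubdiff f (K (x k))"
    and z_step: "\<And>k. N \<le> k \<Longrightarrow> z k = zstep g A \<gamma> (x k)"
    and \<theta>_step: "\<And>k. N \<le> k \<Longrightarrow> ereal (\<theta> k) = Psi A g h S (x k) (z k) (u k) \<delta> \<gamma> / f (K (x k))"
    and \<theta>_nonneg: "\<And>k. N \<le> k \<Longrightarrow> 0 \<le> \<theta> k"
    and den_bounds: "\<And>k. N \<le> k \<Longrightarrow> ereal m \<le> ereal (K (x k) \<bullet> y k) - fconj f (y k)
                   \<and> ereal (K (x k) \<bullet> y k) - fconj f (y k) \<le> f (K (x k)) \<and> f (K (x k)) \<le> ereal M"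
begin

definition fKx :: "nat \<Rightarrow> real" where "fKx k = real_of_ereal (f (K (x k)))"
definition conj_f :: "nat \<Rightarrow> real" where "conj_f k = real_of_ereal (fconj f (y k))"
definition conj_g :: "nat \<Rightarrow> real" where "conj_g k = real_of_ereal (fconj g (z k))"
definition num :: "nat \<Rightarrow> real" where "num k = z k \<bullet> A (x k) - conj_g k + h (x k) + \<delta>/2 * norm (x k - u k)^2 - \<gamma>/2 * norm (z k)^2"
definition den :: "nat \<Rightarrow> real" where "den k = K (x k) \<bullet> y k - conj_f k"

lemma den_real:
  assumes "N \<le> k"
  shows "f (K (x k)) = ereal (fKx k) \<and> fconj f (y k) = ereal (conj_f k)
    \<and> m \<le> den k \<and> den k \<le> fKx k \<and> fKx k \<le> M"
proof -
  have "fconj f (y k) \<noteq> \<infinity>" "fconj f (y k) \<noteq> -\<infinity>" "f (K (x k)) \<noteq> \<infinity>" "f (K (x k)) \<noteq> -\<infinity>"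
    using den_bounds[OF assms] by auto
  then show ?thesis using den_bounds[OF assms] unfolding fKx_def conj_f_def den_def
    by (cases "fconj f (y k)"; cases "f (K (x k))") auto
qed

lemma delta_pos: "0 < \<delta>"
proof -
  have "0 \<le> L" using lipschitz_constant_nonneg[OF h(1) _ h(4)] h(2) x_mem[of N] by blast
  then show ?thesis using params by (smt (verit) divide_nonneg_pos zero_le_power2)
qed

lemma num_real:
  assumes "N \<le> k"
  shows "fconj g (z k) = ereal (conj_g k) \<and> \<theta> k * fKx k = num k \<and> 0 \<le> num k"
proof -
  have fK: "f (K (x k)) = ereal (fKx k)" "0 < fKx k"
    using den_real[OF assms] params(6) by auto
  then have "Psi A g h S (x k) (z k) (u k) \<delta> \<gamma> = ereal (\<theta> k * fKx k)"
    using \<theta>_step[OF assms] by (cases "Psi A g h S (x k) (z k) (u k) \<delta> \<gamma>") (auto split: if_splits)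
  moreover have conj: "fconj g (z k) = ereal (conj_g k)"
    using calculation Psi_eq_MInfty[OF x_mem[OF assms], of g "z k"] fconj_not_MInfty[OF proper(2)]
    unfolding conj_g_def by (cases "fconj g (z k)") auto
  ultimately have "\<theta> k * fKx k = num k"
    using Psi_eq_ereal[OF x_mem[OF assms] conj] unfolding num_def by simp
  then show ?thesis using conj \<theta>_nonneg[OF assms] fK by (metis less_imp_le mult_nonneg_nonneg)
qed

lemma x_step_inequality:
  assumes k: "N \<le> k"
  defines "p \<equiv> x (Suc k)"
  shows "h p + \<delta>/2 * (norm (p - x k)^2 + norm (p - u k)^2 - norm (x k - u k)^2)
    \<le> h (x k) + L/2 * norm (p - x k)^2 + \<theta> k * (K p \<bullet> y (Suc k) - K (x k) \<bullet> y (Suc k))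
       - (z k \<bullet> A p - z k \<bullet> A (x k))"
proof -
  define d where "d = \<theta> k *\<^sub>R adjoint K (y (Suc k)) - gradh (x k) - adjoint A (z k)"
  have "p = closest_point S (u k + (1/\<delta>) *\<^sub>R d)"
    unfolding p_def d_def x_step[OF k] by (simp add: algebra_simps)
  then have "\<delta>/2 * (norm (p - x k)^2 + norm (p - u k)^2 - norm (x k - u k)^2) \<le> d \<bullet> (p - x k)"
    using closest_point_step_inequality[OF S(1) compact_imp_closed[OF S(2)] x_mem[OF k] delta_pos]
    by simp
  also have "d \<bullet> (p - x k) = \<theta> k * (K p \<bullet> y (Suc k) - K (x k) \<bullet> y (Suc k))
      - gradh (x k) \<bullet> (p - x k) - (z k \<bullet> A p - z k \<bullet> A (x k))"
    unfolding d_def using lin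
    by (simp add: inner_diff_left inner_diff_right adjoint_clauses linear_diff inner_commute)
  finally show ?thesis
    using descent_lemma[OF h(1) S(1) h(2-4) x_mem[OF k] x_mem[of "Suc k"]] k
    unfolding p_def by linarith
qed

lemma z_step_inequality:
  assumes k: "N \<le> k"
  defines "p \<equiv> x (Suc k)"
  shows "z (Suc k) \<bullet> A p - conj_g (Suc k) - \<gamma>/2 * norm (z (Suc k))^2
    \<le> z k \<bullet> A p - conj_g k - \<gamma>/2 * norm (z k)^2 - \<gamma>/4 * norm (z k - z (Suc k))^2
       + (onorm A)^2 / \<gamma> * norm (p - x k)^2"
proof -
  obtain G where "fconj g (z k) = ereal G"
    and three_point: "z (Suc k) \<bullet> A (x k) - conj_g (Suc k) - \<gamma>/2 * norm (z (Suc k))^2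
      + \<gamma>/2 * norm (z (Suc k) - z k)^2 \<le> z k \<bullet> A (x k) - G - \<gamma>/2 * norm (z k)^2"
    using zstep_three_point[OF proper(2) params(4), of "z (Suc k)" "conj_g (Suc k)" A "x k"]
      num_real[of "Suc k"] k z_step[OF k] by auto
  then have "G = conj_g k" using num_real[OF k] by simp
  have "(z (Suc k) - z k) \<bullet> A (p - x k) \<le> norm (z (Suc k) - z k) * norm (A (p - x k))"
    by (rule norm_cauchy_schwarz)
  also have "\<dots> \<le> norm (z (Suc k) - z k) * (onorm A * norm (p - x k))"
    using lin(1) by (intro mult_left_mono onorm linear_conv_bounded_linear[THEN iffD1]) auto
  also have "\<dots> \<le> \<gamma>/4 * norm (z (Suc k) - z k)^2 + (onorm A * norm (p - x k))^2 / \<gamma>"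
    by (rule mult_le_weighted_squares[OF params(4)])
  finally have "(z (Suc k) - z k) \<bullet> A (p - x k)
      \<le> \<gamma>/4 * norm (z k - z (Suc k))^2 + (onorm A)^2 / \<gamma> * norm (p - x k)^2"
    by (simp add: power_mult_distrib norm_minus_commute)
  moreover have "(z (Suc k) - z k) \<bullet> A (p - x k) = z (Suc k) \<bullet> A p - z (Suc k) \<bullet> A (x k) - z k \<bullet> A p + z k \<bullet> A (x k)"
    using lin(1) by (simp add: linear_diff inner_diff_left inner_diff_right)
  ultimately show ?thesis using three_point \<open>G = conj_g k\<close> by (simp add: norm_minus_commute)
qed

lemma num_Suc_le:
  assumes k: "N \<le> k"
  shows "num (Suc k) \<le> \<theta> k * den (Suc k) - (\<nu> * norm (x k - x (Suc k))^2
    + \<gamma>/4 * norm (z k - z (Suc k))^2 + \<delta> * (2 - \<beta>) / (2 * \<beta>) * norm (u k - u (Suc k))^2)"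
proof -
  have conj_f_Suc: "conj_f (Suc k) = K (x k) \<bullet> y (Suc k) - fKx k"
    using fenchel_young_eq[OF y_step[OF k]] den_real[OF k] den_real[of "Suc k"] k by (simp add: inner_commute)
  have den: "\<theta> k * den (Suc k) = num k + \<theta> k * (K (x (Suc k)) \<bullet> y (Suc k) - K (x k) \<bullet> y (Suc k))"
    unfolding den_def conj_f_Suc num_real[OF k, THEN conjunct2, THEN conjunct1, symmetric]
    by (simp add: algebra_simps)
  have "x (Suc k) - u (Suc k) = (1 - \<beta>) *\<^sub>R (x (Suc k) - u k)" "u k - u (Suc k) = \<beta> *\<^sub>R (u k - x (Suc k))"
    using u_step[OF k] by (simp_all add: algebra_simps)
  then have u_norms: "norm (x (Suc k) - u (Suc k))^2 = (1 - \<beta>)^2 * norm (x (Suc k) - u k)^2"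
      "norm (u k - u (Suc k))^2 = \<beta>^2 * norm (x (Suc k) - u k)^2"
    by (simp_all add: power_mult_distrib norm_minus_commute)
  have u_Suc: "\<delta>/2 * norm (x (Suc k) - u (Suc k))^2
      = \<delta>/2 * norm (x (Suc k) - u k)^2 - \<delta> * (2 - \<beta>) / (2 * \<beta>) * norm (u k - u (Suc k))^2"
    unfolding u_norms using params(1) by (simp add: field_simps power2_eq_square)
  have "(2 * \<nu> + L + 2 * (onorm A)^2 / \<gamma>) * norm (x (Suc k) - x k)^2 \<le> \<delta> * norm (x (Suc k) - x k)^2"
    using params(5) by (intro mult_right_mono) auto
  then have \<delta>_bound: "\<nu> * norm (x (Suc k) - x k)^2 + L/2 * norm (x (Suc k) - x k)^2
      + (onorm A)^2 / \<gamma> * norm (x (Suc k) - x k)^2 \<le> \<delta>/2 * norm (x (Suc k) - x k)^2"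
    by (simp add: algebra_simps)
  have \<delta>_split: "\<delta>/2 * (a + b - c) = \<delta>/2 * a + \<delta>/2 * b - \<delta>/2 * c" for a b c
    by (simp add: field_simps)
  have x_diff: "norm (x k - x (Suc k)) = norm (x (Suc k) - x k)" by (rule norm_minus_commute)
  show ?thesis
    using x_step_inequality[OF k] z_step_inequality[OF k] den u_Suc \<delta>_bound
    unfolding num_def \<delta>_split x_diff by linarith
qed

lemma Gamma_eq_ratio:
  assumes "N \<le> k"
  shows "Gamma A K f g h S \<delta> \<gamma> (x k) (y k) (z k) (u k) = ereal (num k / den k)"
proof -
  have "K (x k) \<bullet> y k - conj_f k \<noteq> 0" using den_real[OF assms] params(6) unfolding den_def by auto
  then show ?thesis
    using Gamma_eq_ereal[OF x_mem[OF assms] conjunct1[OF num_real[OF assms]]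
        den_real[OF assms, THEN conjunct2, THEN conjunct1]]
    unfolding num_def den_def by simp
qed

lemma theta_le_ratio:
  assumes "N \<le> k"
  shows "\<theta> k \<le> num k / den k"
proof -
  have "0 < den k" "den k \<le> fKx k" using den_real[OF assms] params(6) by auto
  then have "num k / fKx k \<le> num k / den k"
    using num_real[OF assms] by (intro divide_left_mono) auto
  moreover have "\<theta> k = num k / fKx k"
    using num_real[OF assms] \<open>0 < den k\<close> \<open>den k \<le> fKx k\<close> by (simp add: eq_divide_eq)
  ultimately show ?thesis by simp
qed

lemma ratio_Suc_le:
  obtains c where "c > 0" and "\<And>k. N \<le> k \<Longrightarrow> num (Suc k) / den (Suc k) \<le> \<theta> k
    - c * norm (x k - x (Suc k))^2 - c * norm (u k - u (Suc k))^2 - c * norm (z k - z (Suc k))^2"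
proof -
  define c3 where "c3 = \<delta> * (2 - \<beta>) / (2 * \<beta>)"
  have "0 < c3" unfolding c3_def using delta_pos params(1,2) by simp
  have "0 < M" using den_real[of N] params(6) by auto
  define c where "c = min \<nu> (min (\<gamma>/4) c3) / M"
  have "0 < c" unfolding c_def using params(3,4) \<open>0 < c3\<close> \<open>0 < M\<close> by simp
  moreover have "num (Suc k) / den (Suc k) \<le> \<theta> k
    - c * norm (x k - x (Suc k))^2 - c * norm (u k - u (Suc k))^2 - c * norm (z k - z (Suc k))^2"
    if k: "N \<le> k" for k
  proof -
    define E where "E = \<nu> * norm (x k - x (Suc k))^2 + \<gamma>/4 * norm (z k - z (Suc k))^2
      + c3 * norm (u k - u (Suc k))^2"
    have den: "0 < den (Suc k)" "den (Suc k) \<le> M" using den_real[of "Suc k"] k params(6) by auto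
    have "0 \<le> E" unfolding E_def using params(3,4) \<open>0 < c3\<close> by simp
    have "num (Suc k) / den (Suc k) \<le> (\<theta> k * den (Suc k) - E) / den (Suc k)"
      using num_Suc_le[OF k] den unfolding E_def c3_def by (simp add: divide_right_mono)
    also have "\<dots> = \<theta> k - E / den (Suc k)" using den by (simp add: field_simps)
    also have "\<dots> \<le> \<theta> k - E / M" using den \<open>0 \<le> E\<close> by (simp add: frac_le)
    finally have "num (Suc k) / den (Suc k) \<le> \<theta> k - E / M" .
    moreover have "c * (norm (x k - x (Suc k))^2 + norm (u k - u (Suc k))^2 + norm (z k - z (Suc k))^2) \<le> E / M"
    proof -
      let ?c0 = "min \<nu> (min (\<gamma>/4) c3)"
      have "?c0 * norm (x k - x (Suc k))^2 \<le> \<nu> * norm (x k - x (Suc k))^2"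
        "?c0 * norm (z k - z (Suc k))^2 \<le> \<gamma>/4 * norm (z k - z (Suc k))^2"
        "?c0 * norm (u k - u (Suc k))^2 \<le> c3 * norm (u k - u (Suc k))^2"
        by (intro mult_right_mono; simp)+
      then have "?c0 * (norm (x k - x (Suc k))^2 + norm (u k - u (Suc k))^2 + norm (z k - z (Suc k))^2) \<le> E"
        unfolding E_def by (simp add: distrib_left)
      then show ?thesis unfolding c_def using \<open>0 < M\<close> by (simp add: divide_right_mono)
    qed
    ultimately show ?thesis by (simp add: algebra_simps)
  qed
  ultimately show ?thesis using that by blast
qed

lemma Gamma_descent:
  "\<exists>c>0. \<forall>k\<ge>N.
     Gamma A K f g h S \<delta> \<gamma> (x (Suc k)) (y (Suc k)) (z (Suc k)) (u (Suc k))
     \<le> Gamma A K f g h S \<delta> \<gamma> (x k) (y k) (z k) (u k)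
        - ereal (c * norm (x k - x (Suc k))^2) - ereal (c * norm (u k - u (Suc k))^2)
        - ereal (c * norm (z k - z (Suc k))^2)"
proof -
  obtain c where "c > 0" and c: "\<And>k. N \<le> k \<Longrightarrow> num (Suc k) / den (Suc k) \<le> \<theta> k
    - c * norm (x k - x (Suc k))^2 - c * norm (u k - u (Suc k))^2 - c * norm (z k - z (Suc k))^2"
    using ratio_Suc_le by blast
  have "num (Suc k) / den (Suc k) \<le> num k / den k
    - c * norm (x k - x (Suc k))^2 - c * norm (u k - u (Suc k))^2 - c * norm (z k - z (Suc k))^2"
    if "N \<le> k" for k using c[OF that] theta_le_ratio[OF that] by linarith
  then show ?thesis using \<open>c > 0\<close> by (auto simp: Gamma_eq_ratio)
qed

lemma theta_ratio_tendsto: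
  obtains \<theta>bar where "\<theta> \<longlonglongrightarrow> \<theta>bar" and "(\<lambda>k. num k / den k) \<longlonglongrightarrow> \<theta>bar"
proof -
  obtain c where "c > 0" and c: "\<And>k. N \<le> k \<Longrightarrow> num (Suc k) / den (Suc k) \<le> \<theta> k
    - c * norm (x k - x (Suc k))^2 - c * norm (u k - u (Suc k))^2 - c * norm (z k - z (Suc k))^2"
    using ratio_Suc_le by blast
  have ratio_le: "num (Suc k) / den (Suc k) \<le> \<theta> k" if "N \<le> k" for k
    using c[OF that] \<open>c > 0\<close> by (smt (verit) mult_nonneg_nonneg zero_le_power2)
  have "decseq (\<lambda>n. \<theta> (n + N))"
    using ratio_le theta_le_ratio by (intro decseq_SucI) (smt (verit) add_Suc le_add2)
  then obtain \<theta>bar where "(\<lambda>n. \<theta> (n + N)) \<longlonglongrightarrow> \<theta>bar"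
    using \<theta>_nonneg by (metis decseq_convergent le_add2)
  then have \<theta>: "\<theta> \<longlonglongrightarrow> \<theta>bar" by (rule LIMSEQ_offset)
  have "(\<lambda>k. num k / den k) \<longlonglongrightarrow> \<theta>bar"
  proof (rule tendsto_sandwich[OF _ _ \<theta> LIMSEQ_offset[of "\<lambda>k. \<theta> (k - 1)" 1]])
    show "\<forall>\<^sub>F k in sequentially. \<theta> k \<le> num k / den k"
      using theta_le_ratio unfolding eventually_sequentially by blast
    show "\<forall>\<^sub>F k in sequentially. num k / den k \<le> \<theta> (k - 1)"
      unfolding eventually_sequentially
    proof (intro exI allI impI)
      fix k assume "Suc N \<le> k"
      then show "num k / den k \<le> \<theta> (k - 1)" using ratio_le[of "k - 1"] by simp
    qed
  qed (use \<theta> in simp)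
  then show ?thesis using that \<theta> by blast
qed

lemma Gamma_tendsto:
  assumes "(\<lambda>k. num k / den k) \<longlonglongrightarrow> \<theta>bar"
  shows "(\<lambda>k. Gamma A K f g h S \<delta> \<gamma> (x k) (y k) (z k) (u k)) \<longlonglongrightarrow> ereal \<theta>bar"
proof (rule Lim_transform_eventually)
  show "(\<lambda>k. ereal (num k / den k)) \<longlonglongrightarrow> ereal \<theta>bar" using assms by simp
  show "\<forall>\<^sub>F k in sequentially. ereal (num k / den k) = Gamma A K f g h S \<delta> \<gamma> (x k) (y k) (z k) (u k)"
    using eventually_ge_at_top[of N] by eventually_elim (simp add: Gamma_eq_ratio)
qed

lemma conj_f_tendsto_along_subsequence:
  assumes r: "strict_mono r" and y: "(\<lambda>k. y (r k)) \<longlonglongrightarrow> yb"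
  obtains Fb where "fconj f yb = ereal Fb" and "(\<lambda>k. conj_f (r k)) \<longlonglongrightarrow> Fb"
proof -
  obtain B where B: "\<forall>v\<in>K ` S. norm v \<le> B"
    using compact_imp_bounded[OF compact_continuous_image[OF linear_continuous_on[OF
          linear_conv_bounded_linear[THEN iffD1, OF lin(2)]] S(2)]] unfolding bounded_iff by blast
  have "\<forall>\<^sub>F k in sequentially. y (r k) \<in> esubdiff f (K (x (r k - 1)))
      \<and> norm (K (x (r k - 1))) \<le> B \<and> ereal m \<le> f (K (x (r k - 1)))"
    using eventually_subseq[OF r eventually_ge_at_top[of "Suc N"]]
  proof eventually_elim
    case (elim k)
    then have "N \<le> r k - 1" "Suc (r k - 1) = r k" by auto
    then show ?case using y_step[of "r k - 1"] x_mem[of "r k - 1"] den_real[of "r k - 1"] B by auto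
  qed
  then have "\<forall>\<^sub>F k in sequentially. y (r k) \<in> esubdiff f (K (x (r k - 1)))"
      "\<forall>\<^sub>F k in sequentially. norm (K (x (r k - 1))) \<le> B \<and> ereal m \<le> f (K (x (r k - 1)))"
    by (auto elim: eventually_mono)
  note conj_f_conv = subgradient_fconj_tendsto[OF proper(1) this y]
  obtain Fb where Fb: "fconj f yb = ereal Fb"
    using conj_f_conv(1) fconj_not_MInfty[OF proper(1), of yb] by (cases "fconj f yb") auto
  moreover have "(\<lambda>k. conj_f (r k)) \<longlonglongrightarrow> Fb"
    unfolding conj_f_def using conj_f_conv(2) Fb by (intro lim_real_of_ereal) simp
  ultimately show ?thesis using that by blast
qed

lemma conj_g_tendsto_along_subsequence:
  assumes r: "strict_mono r" and x: "(\<lambda>k. x (r k)) \<longlonglongrightarrow> xb" and z: "(\<lambda>k. z (r k)) \<longlonglongrightarrow> zb"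
  obtains Gb where "fconj g zb = ereal Gb" and "(\<lambda>k. conj_g (r k)) \<longlonglongrightarrow> Gb"
proof -
  have Ax: "(\<lambda>k. A (x (r k))) \<longlonglongrightarrow> A xb"
    using x linear_conv_bounded_linear lin(1) bounded_linear.tendsto by blast
  have z_ev: "\<forall>\<^sub>F k in sequentially. z (r k) = zstep g A \<gamma> (x (r k))"
    using eventually_subseq[OF r eventually_ge_at_top[of N]] by (auto elim!: eventually_mono intro: z_step)
  have "fconj g (z N) \<noteq> \<infinity>" using num_real[of N] by simp
  note conj_g_conv = zstep_fconj_tendsto[OF proper(2) params(4) this z_ev Ax z]
  obtain Gb where Gb: "fconj g zb = ereal Gb"
    using conj_g_conv(1) fconj_not_MInfty[OF proper(2), of zb] by (cases "fconj g zb") auto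
  moreover have "(\<lambda>k. conj_g (r k)) \<longlonglongrightarrow> Gb"
    unfolding conj_g_def using conj_g_conv(2) Gb by (intro lim_real_of_ereal) simp
  ultimately show ?thesis using that by blast
qed

lemma Gamma_at_accumulation_point:
  assumes ratio: "(\<lambda>k. num k / den k) \<longlonglongrightarrow> \<theta>bar" and r: "strict_mono r"
    and lim: "(\<lambda>k. x (r k)) \<longlonglongrightarrow> xb" "(\<lambda>k. y (r k)) \<longlonglongrightarrow> yb"
      "(\<lambda>k. z (r k)) \<longlonglongrightarrow> zb" "(\<lambda>k. u (r k)) \<longlonglongrightarrow> ub"
  shows "Gamma A K f g h S \<delta> \<gamma> xb yb zb ub = ereal \<theta>bar"
proof -
  have late: "\<forall>\<^sub>F k in sequentially. N \<le> r k"
    using eventually_subseq[OF r eventually_ge_at_top] .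
  have "xb \<in> S"
    using late by (intro Lim_in_closed_set[OF compact_imp_closed[OF S(2)] _ _ lim(1)])
      (auto elim!: eventually_mono intro: x_mem)
  obtain Fb where Fb: "fconj f yb = ereal Fb" and cf: "(\<lambda>k. conj_f (r k)) \<longlonglongrightarrow> Fb"
    using conj_f_tendsto_along_subsequence[OF r lim(2)] .
  obtain Gb where Gb: "fconj g zb = ereal Gb" and cg: "(\<lambda>k. conj_g (r k)) \<longlonglongrightarrow> Gb"
    using conj_g_tendsto_along_subsequence[OF r lim(1,3)] .
  define Pb where "Pb = zb \<bullet> A xb - Gb + h xb + \<delta>/2 * norm (xb - ub)^2 - \<gamma>/2 * norm zb^2"
  define Db where "Db = K xb \<bullet> yb - Fb"
  have "isCont h xb" using h(2,3) \<open>xb \<in> S\<close> has_derivative_continuous by blast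
  then have hx: "(\<lambda>k. h (x (r k))) \<longlonglongrightarrow> h xb" using lim(1) by (rule isCont_tendsto_compose)
  have Ax: "(\<lambda>k. A (x (r k))) \<longlonglongrightarrow> A xb" and Kx: "(\<lambda>k. K (x (r k))) \<longlonglongrightarrow> K xb"
    using lim(1) linear_conv_bounded_linear lin bounded_linear.tendsto by blast+
  have num_lim: "(\<lambda>k. num (r k)) \<longlonglongrightarrow> Pb"
    unfolding num_def Pb_def by (intro tendsto_intros lim Ax hx cg)
  have den_lim: "(\<lambda>k. den (r k)) \<longlonglongrightarrow> Db"
    unfolding den_def Db_def by (intro tendsto_intros lim Kx cf)
  have "m \<le> Db"
    using late by (intro tendsto_lowerbound[OF den_lim]) (auto elim!: eventually_mono simp: den_real)
  then have "(\<lambda>k. num (r k) / den (r k)) \<longlonglongrightarrow> Pb / Db"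
    using num_lim den_lim params(6) by (intro tendsto_divide) auto
  moreover have "(\<lambda>k. num (r k) / den (r k)) \<longlonglongrightarrow> \<theta>bar"
    using LIMSEQ_subseq_LIMSEQ[OF ratio r] by (simp add: o_def)
  ultimately have "Pb / Db = \<theta>bar" by (rule LIMSEQ_unique)
  then show ?thesis
    using Gamma_eq_ereal[OF \<open>xb \<in> S\<close> Gb Fb] \<open>m \<le> Db\<close> params(6)
    unfolding Pb_def Db_def by simp
qed

end

theorem theorem5p4:
  fixes S :: "'a::euclidean_space set"
    and A :: "'a \<Rightarrow> 'b::euclidean_space" and K :: "'a \<Rightarrow> 'c::euclidean_space"
    and g :: "'b \<Rightarrow> ereal" and f :: "'c \<Rightarrow> ereal"
    and h :: "'a \<Rightarrow> real" and gradh :: "'a \<Rightarrow> 'a" and U :: "'a set" and L :: real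
    and ell \<beta> \<nu> q \<delta>0 \<theta>0 \<epsilon> :: real
    and x u :: "nat \<Rightarrow> 'a" and y :: "nat \<Rightarrow> 'c" and z :: "nat \<Rightarrow> 'b"
    and \<theta> gam del :: "nat \<Rightarrow> real" and j :: "nat \<Rightarrow> nat"
    and \<gamma> m M :: real and K0 K1 :: nat
  assumes S: "S \<noteq> {}" "convex S" "compact S"
    and lin: "linear A" "linear K"
    and g: "eproper g" "econvex g" "elsc g"
    and h: "open U" "S \<subseteq> U" "\<forall>w\<in>U. (h has_derivative (\<lambda>v. gradh w \<bullet> v)) (at w)"
           "\<forall>w\<in>U. \<forall>w'\<in>U. norm (gradh w - gradh w') \<le> L * norm (w - w')"
    and f: "eproper f" "econvex f" "elsc f" "K ` S \<subseteq> interior (edom f)"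
           "\<forall>w\<in>S. f (K w) > 0"
    and dom: "S \<inter> A -` edom g \<noteq> {}"
    and inf_pos: "(INF w\<in>S. g (A w) + ereal (h w)) > 0"
    and subd: "\<forall>w\<in>S. esubdiff g (A w) \<noteq> {}"
    and ell: "ell > 0" "\<forall>w\<in>S. infdist 0 (esubdiff g (A w)) \<le> ell"
    and params: "0 < \<beta>" "\<beta> < 2" "\<nu> > 0" "0 < q" "q < 1" "\<delta>0 > 0" "\<theta>0 > 0" "\<epsilon> > 0"
    and init: "gam 0 = 1" "del 0 = \<delta>0" "\<theta> 0 = \<theta>0"
    and y_step: "\<forall>k. y (Suc k) \<in> esubdiff f (K (x k))"
    and x_step: "\<forall>k. x (Suc k) = closest_point S (u k + (\<theta> k / del k) *\<^sub>R adjoint K (y (Suc k))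
                    - (1 / del k) *\<^sub>R gradh (x k) - (1 / del k) *\<^sub>R adjoint A (z k))"
    and u_step: "\<forall>k. u (Suc k) = (1 - \<beta>) *\<^sub>R u k + \<beta> *\<^sub>R x (Suc k)"
    and j_ok: "\<forall>k. 0 < Psi A g h S (x (Suc k)) (zstep g A (gam k * q ^ j k) (x (Suc k)))
                        (u (Suc k)) (del k) (gam k * q ^ j k) / f (K (x (Suc k)))"
    and j_least: "\<forall>k. \<forall>i < j k. \<not> (0 < Psi A g h S (x (Suc k)) (zstep g A (gam k * q ^ i) (x (Suc k)))
                        (u (Suc k)) (del k) (gam k * q ^ i) / f (K (x (Suc k))))"
    and \<theta>_step: "\<forall>k. ereal (\<theta> (Suc k)) = Psi A g h S (x (Suc k)) (zstep g A (gam k * q ^ j k) (x (Suc k)))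
                        (u (Suc k)) (del k) (gam k * q ^ j k) / f (K (x (Suc k)))"
    and z_step: "\<forall>k. z (Suc k) = zstep g A (gam k * q ^ j k) (x (Suc k))"
    and gam_step: "\<forall>k. gam (Suc k) =
          (if norm (z (Suc k)) > min (\<epsilon> / (gam k * q ^ j k)) (sqrt (2 * \<epsilon> / (gam k * q ^ j k)))
           then gam k * q ^ j k * q else gam k * q ^ j k)"
    and del_step: "\<forall>k. del (Suc k) = 2 * \<nu> + L + 2 * (onorm A)^2 / gam (Suc k)"
    and \<gamma>: "\<gamma> > 0"
    and K0: "\<forall>k\<ge>K0. gam k = \<gamma> \<and> del k = 2 * \<nu> + L + 2 * (onorm A)^2 / \<gamma>
                  \<and> norm (z (Suc k)) \<le> min (\<epsilon> / \<gamma>) (sqrt (2 * \<epsilon> / \<gamma>))"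
    and mM: "0 < m" "m \<le> M" "\<forall>k\<ge>1. ereal m < f (K (x k)) \<and> f (K (x k)) \<le> ereal M"
    and K1: "K1 \<ge> K0 + 1"
           "\<forall>k\<ge>K1. ereal m \<le> ereal (K (x k) \<bullet> y k) - fconj f (y k)
                   \<and> ereal (K (x k) \<bullet> y k) - fconj f (y k) \<le> f (K (x k)) \<and> f (K (x k)) \<le> ereal M"
  shows "(\<exists>c>0. \<forall>k\<ge>K1.
            Gamma A K f g h S (2 * \<nu> + L + 2 * (onorm A)^2 / \<gamma>) \<gamma> (x (Suc k)) (y (Suc k)) (z (Suc k)) (u (Suc k))
            \<le> Gamma A K f g h S (2 * \<nu> + L + 2 * (onorm A)^2 / \<gamma>) \<gamma> (x k) (y k) (z k) (u k)
               - ereal (c * norm (x k - x (Suc k))^2) - ereal (c * norm (u k - u (Suc k))^2)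
               - ereal (c * norm (z k - z (Suc k))^2))
       \<and> (\<exists>\<theta>bar. \<theta> \<longlonglongrightarrow> \<theta>bar
            \<and> (\<lambda>k. Gamma A K f g h S (2 * \<nu> + L + 2 * (onorm A)^2 / \<gamma>) \<gamma> (x k) (y k) (z k) (u k))
                 \<longlonglongrightarrow> ereal \<theta>bar
            \<and> (\<forall>r xb yb zb ub. strict_mono r \<and> (\<lambda>k. x (r k)) \<longlonglongrightarrow> xb \<and> (\<lambda>k. y (r k)) \<longlonglongrightarrow> yb
                  \<and> (\<lambda>k. z (r k)) \<longlonglongrightarrow> zb \<and> (\<lambda>k. u (r k)) \<longlonglongrightarrow> ub
                \<longrightarrow> Gamma A K f g h S (2 * \<nu> + L + 2 * (onorm A)^2 / \<gamma>) \<gamma> xb yb zb ub = ereal \<theta>bar))"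
proof -
  define \<delta> where "\<delta> = 2 * \<nu> + L + 2 * (onorm A)^2 / \<gamma>"
  have frozen: "gam k = \<gamma> \<and> del k = \<delta> \<and> j k = 0" if "K0 \<le> k" for k
  proof -
    have gam: "gam k = \<gamma>" "gam (Suc k) = \<gamma>" and "del k = \<delta>"
      using K0 that unfolding \<delta>_def by auto
    moreover have "j k = 0"
      using gam_step[rule_format, of k] unfolding gam
      by (rule backtracking_exponent_eq_0[OF params(4,5), rotated]) (use \<gamma> in simp)
    ultimately show ?thesis by simp
  qed
  interpret steady_iteration S A K f g h gradh U L \<beta> \<nu> \<gamma> \<delta> m M x u y z \<theta> K1
  proof unfold_locales
    fix k assume "K1 \<le> k"
    then obtain i where i: "k = Suc i" "K0 \<le> i" using K1(1) by (cases k) auto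
    have "0 < ereal (\<theta> k)" unfolding i(1) \<theta>_step[rule_format] by (rule j_ok[rule_format])
    then show "0 \<le> \<theta> k" by simp
    show "x k \<in> S"
      using x_step[rule_format, of i] closest_point_in_set[OF compact_imp_closed[OF S(3)] S(1)] i(1) by simp
    show "z k = zstep g A \<gamma> (x k)" "ereal (\<theta> k) = Psi A g h S (x k) (z k) (u k) \<delta> \<gamma> / f (K (x k))"
      using z_step[rule_format, of i] \<theta>_step[rule_format, of i] frozen[OF i(2)] i(1) by simp_all
    show "x (Suc k) = closest_point S (u k + (\<theta> k / \<delta>) *\<^sub>R adjoint K (y (Suc k))
        - (1 / \<delta>) *\<^sub>R gradh (x k) - (1 / \<delta>) *\<^sub>R adjoint A (z k))"
      using x_step[rule_format, of k] frozen[of k] i by simp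
    show "u (Suc k) = (1 - \<beta>) *\<^sub>R u k + \<beta> *\<^sub>R x (Suc k)" "y (Suc k) \<in> esubdiff f (K (x k))"
      using u_step y_step by blast+
    show "ereal m \<le> ereal (K (x k) \<bullet> y k) - fconj f (y k)
        \<and> ereal (K (x k) \<bullet> y k) - fconj f (y k) \<le> f (K (x k)) \<and> f (K (x k)) \<le> ereal M"
      using K1(2) \<open>K1 \<le> k\<close> by blast
  qed (use S(2,3) h f(1) g(1) params(1-3) \<gamma> mM(1) lin in \<open>auto simp: \<delta>_def linear_add linear_scale\<close>)
  obtain \<theta>bar where "\<theta> \<longlonglongrightarrow> \<theta>bar" "(\<lambda>k. num k / den k) \<longlonglongrightarrow> \<theta>bar"
    by (rule theta_ratio_tendsto)
  then show ?thesis
    using Gamma_descent Gamma_tendsto Gamma_at_accumulation_point unfolding \<delta>_def by blast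
qed

end
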